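(* Let $M=I\times_{\phi^{p_1}}F_1\times_{\phi^{p_2}}F_2\times_{\phi^{p_3}}F_3$ be a generalized Kasner spacetime with $\dim F_1=\dim F_2=\dim F_3=1$ and $P=\partial/\partial t$. Then the scalar curvature $\overline S$ of $(M,\overline\nabla)$ is constant if and only if one of the following holds: (1) $\zeta=\eta=0$ and $\overline S=3$; (2) $\zeta=0$, $\eta\neq0$, and: $\overline S>3$ is impossible; if $\overline S=3$ then $\phi$ is constant; if $\overline S<3$ then $\phi(t)=c_0e^{\pm\sqrt{-(\overline S-3)/\eta}\,t}$ for a constant $c_0>0$; (3) $\zeta\neq0$, and with $\triangle=\frac94-\frac{(\overline S-3)(\eta+\zeta^2)}{\zeta^2}$ and real constants $c_1,c_2$ making the base positive on $I$: (3a) if $\overline S<\frac{9\zeta^2}{4(\eta+\zeta^2)}+3$: $\phi=\Big(c_1e^{\frac{\frac32+\sqrt\triangle}{2}t}+c_2e^{\frac{\frac32-\sqrt\triangle}{2}t}\Big)^{\frac{2\zeta}{\eta+\zeta^2}}$; (3b) if $\overline S=\frac{9\zeta^2}{4(\eta+\zeta^2)}+3$: $\phi=\big(c_1e^{\frac34t}+c_2te^{\frac34t}\big)^{\frac{2\zeta}{\eta+\zeta^2}}$; (3c) if $\overline S>\frac{9\zeta^2}{4(\eta+\zeta^2)}+3$: $\phi=\Big(c_1e^{\frac34t}\cos\big(\frac{\sqrt{-\triangle}}2t\big)+c_2e^{\frac34t}\sin\big(\frac{\sqrt{-\triangle}}2t\big)\Big)^{\frac{2\zeta}{\eta+\ze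ta^2}}$.
   Context: A generalized Kasner spacetime is $M=I\times F_1\times\cdots\times F_m$, $I=(t_1,t_2)$, Riemannian $(F_i,g_{F_i})$, $l_i=\dim F_i$, metric $g=-dt^2\oplus\phi^{2p_1}g_{F_1}\oplus\cdots\oplus\phi^{2p_m}g_{F_m}$ with $\phi:I\to(0,\infty)$ smooth, $p_i\in\mathbb R$; $\zeta=\sum_il_ip_i$, $\eta=\sum_il_ip_i^2$. $\nabla$ Levi-Civita of $g$, $\pi(X)=g(X,P)$, $\overline\nabla_XY=\nabla_XY+\pi(Y)X$. Curvature $R(X,Y)Z=\nabla_X\nabla_YZ-\nabla_Y\nabla_XZ-\nabla_{[X,Y]}Z$; Ricci $\mathrm{Ric}(X,Y)=\sum_k\varepsilon_kg(R(X,E_k)Y,E_k)$; scalar curvature $S=\sum_k\varepsilon_k\mathrm{Ric}(E_k,E_k)$ over local orthonormal frames, $\varepsilon_k=g(E_k,E_k)$. *)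

theory Defs
  imports "HOL-Analysis.Analysis"
begin

text \<open>Generalized Kasner spacetime with three one-dimensional fibres, written in
  local coordinates (x0 = t, x1, x2, x3); each 1-dimensional Riemannian fibre is
  locally isometric to an interval of the real line, so locally
  g = -dt^2 + phi^(2 p1) dx1^2 + phi^(2 p2) dx2^2 + phi^(2 p3) dx3^2.
  All metric components depend on t only.\<close>

definition smooth_on :: "real set \<Rightarrow> (real \<Rightarrow> real) \<Rightarrow> bool" where
  "smooth_on S f \<longleftrightarrow> (\<forall>n. \<forall>t\<in>S. ((deriv ^^ n) f) differentiable (at t))"

definition zeta :: "(nat \<Rightarrow> real) \<Rightarrow> real" where
  "zeta p = (\<Sum>i\<in>{1..3}. p i)"

definition eta :: "(nat \<Rightarrow> real) \<Rightarrow> real" where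
  "eta p = (\<Sum>i\<in>{1..3}. (p i)^2)"

definition kg :: "(real \<Rightarrow> real) \<Rightarrow> (nat \<Rightarrow> real) \<Rightarrow> nat \<Rightarrow> nat \<Rightarrow> real \<Rightarrow> real" where
  "kg phi p a b t = (if a \<noteq> b then 0 else if a = 0 then -1 else phi t powr (2 * p a))"

definition kginv :: "(real \<Rightarrow> real) \<Rightarrow> (nat \<Rightarrow> real) \<Rightarrow> nat \<Rightarrow> nat \<Rightarrow> real \<Rightarrow> real" where
  "kginv phi p a b t = (if a \<noteq> b then 0 else if a = 0 then -1 else phi t powr (- 2 * p a))"

text \<open>coordinate partial derivative d/dx^c of a function depending only on t\<close>
definition dcoord :: "(real \<Rightarrow> real) \<Rightarrow> nat \<Rightarrow> real \<Rightarrow> real" where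
  "dcoord f c t = (if c = 0 then deriv f t else 0)"

text \<open>Levi-Civita Christoffel symbols: nabla_{d_i} d_j = sum_k Gamma k i j d_k\<close>
definition christ :: "(real \<Rightarrow> real) \<Rightarrow> (nat \<Rightarrow> real) \<Rightarrow> nat \<Rightarrow> nat \<Rightarrow> nat \<Rightarrow> real \<Rightarrow> real" where
  "christ phi p k i j t = 1/2 * (\<Sum>l<4. kginv phi p k l t *
      (dcoord (kg phi p j l) i t + dcoord (kg phi p i l) j t - dcoord (kg phi p i j) l t))"

text \<open>Connection nablabar_X Y = nabla_X Y + pi(Y) X with pi(Y) = g(Y,P), P = d/dt:
  nablabar_{d_i} d_j = sum_k (Gamma k i j + g(d_j, d_0) delta_ki) d_k\<close>
definition christbar :: "(real \<Rightarrow> real) \<Rightarrow> (nat \<Rightarrow> real) \<Rightarrow> nat \<Rightarrow> nat \<Rightarrow> nat \<Rightarrow> real \<Rightarrow> real" where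
  "christbar phi p k i j t = christ phi p k i j t + (if k = i then kg phi p j 0 t else 0)"

text \<open>Curvature R(X,Y)Z = nablabar_X nablabar_Y Z - nablabar_Y nablabar_X Z - nablabar_[X,Y] Z:
  R(d_i,d_j) d_l = sum_k riembar k i j l d_k\<close>
definition riembar :: "(real \<Rightarrow> real) \<Rightarrow> (nat \<Rightarrow> real) \<Rightarrow> nat \<Rightarrow> nat \<Rightarrow> nat \<Rightarrow> nat \<Rightarrow> real \<Rightarrow> real" where
  "riembar phi p k i j l t =
     dcoord (christbar phi p k j l) i t - dcoord (christbar phi p k i l) j t
     + (\<Sum>m<4. christbar phi p m j l t * christbar phi p k i m t
              - christbar phi p m i l t * christbar phi p k j m t)"

text \<open>Ric(X,Y) = sum_k eps_k g(R(X,E_k)Y, E_k) (frame independent trace):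
  Ric(d_a,d_b) = sum_{c,d} g^cd g(R(d_a,d_c)d_b, d_d)\<close>
definition riccibar :: "(real \<Rightarrow> real) \<Rightarrow> (nat \<Rightarrow> real) \<Rightarrow> nat \<Rightarrow> nat \<Rightarrow> real \<Rightarrow> real" where
  "riccibar phi p a b t = (\<Sum>c<4. \<Sum>d<4. kginv phi p c d t *
      (\<Sum>k<4. riembar phi p k a c b t * kg phi p k d t))"

text \<open>scalar curvature S = sum_k eps_k Ric(E_k,E_k) = sum_{a,b} g^ab Ric(d_a,d_b)\<close>
definition scalarbar :: "(real \<Rightarrow> real) \<Rightarrow> (nat \<Rightarrow> real) \<Rightarrow> real \<Rightarrow> real" where
  "scalarbar phi p t = (\<Sum>a<4. \<Sum>b<4. kginv phi p a b t * riccibar phi p a b t)"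

end

theory Submission
  imports Defs
begin

(* Computing the Christoffel symbols of nablabar in coordinates and tracing the
      curvature twice gives, with u = phi'/phi and v = phi''/phi,
        Sbar = 3 + 3 zeta u - 2 zeta v - (eta + zeta^2 - 2 zeta) u^2        (scalarbar_formula).
   2. zeta = 0.  Then Sbar = 3 - eta u^2, so Sbar is constant iff u^2 is constant; a continuous
      function with constant square has constant sign, hence u is constant and phi is exponential.
   3. zeta <> 0.  Writing phi = y^k with k = 2 zeta/(eta + zeta^2) turns the equation into the
      linear constant-coefficient ODE  y'' = 3/2 y' - c y,  c = (Sbar - 3)(eta + zeta^2)/(4 zeta^2)
      (constant_scalarbar_iff_solves_ode2).  Its solutions are classified by the sign of the
      discriminant D = 9/4 - 4c, which is the sign of B - Sbar for the threshold B of the theorem. *)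

lemma lessThan4: "{..<4::nat} = {0, 1, 2, 3}"
  by auto

lemma zeta_three: "zeta p = p 1 + p 2 + p 3"
  by (simp add: zeta_def numeral_eq_Suc atLeastAtMostSuc_conv)

lemma eta_three: "eta p = (p 1)^2 + (p 2)^2 + (p 3)^2"
  by (simp add: eta_def numeral_eq_Suc atLeastAtMostSuc_conv)

lemma eta_plus_zeta_sq_pos: "zeta p \<noteq> 0 \<Longrightarrow> eta p + (zeta p)^2 > 0"
  by (simp add: eta_three add_nonneg_pos)

lemma deriv_kg:
  assumes pos: "phi t > 0" and d1: "(phi has_real_derivative deriv phi t) (at t)"
  shows "deriv (kg phi p a b) t =
    (if a = b \<and> a \<noteq> 0 then 2 * p a * phi t powr (2 * p a) * (deriv phi t / phi t) else 0)"
proof (cases "a = b \<and> a \<noteq> 0")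
  case True
  then have "kg phi p a b = (\<lambda>t. phi t powr (2 * p a))"
    by (auto simp: kg_def)
  moreover have "((\<lambda>t. phi t powr (2 * p a)) has_real_derivative
      2 * p a * phi t powr (2 * p a) * (deriv phi t / phi t)) (at t)"
    using DERIV_fun_powr[OF d1 pos, of "2 * p a"] pos by (simp add: powr_diff)
  ultimately show ?thesis
    using True by (simp add: DERIV_imp_deriv)
next
  case False
  then have "kg phi p a b = (\<lambda>t. if a \<noteq> b then 0 else -1)"
    by (auto simp: kg_def)
  then show ?thesis
    unfolding if_not_P[OF False] by simp
qed

definition kasner_christ :: "(real \<Rightarrow> real) \<Rightarrow> (nat \<Rightarrow> real) \<Rightarrow> nat \<Rightarrow> nat \<Rightarrow> nat \<Rightarrow> real \<Rightarrow> real" where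
  "kasner_christ phi p k i j t = (let u = deriv phi t / phi t in
     if k = 0 \<and> i = 0 \<and> j = 0 then -1
     else if k = 0 \<and> i = j then phi t powr (2 * p i) * (p i * u)
     else if k = i \<and> j = 0 then p i * u - 1
     else if k = j \<and> i = 0 then p j * u
     else 0)"

definition kasner_christ' :: "(real \<Rightarrow> real) \<Rightarrow> (nat \<Rightarrow> real) \<Rightarrow> nat \<Rightarrow> nat \<Rightarrow> nat \<Rightarrow> real \<Rightarrow> real" where
  "kasner_christ' phi p k i j t = (let u = deriv phi t / phi t;
       u' = deriv (deriv phi) t / phi t - u^2 in
     if k = 0 \<and> i = 0 \<and> j = 0 then 0
     else if k = 0 \<and> i = j then phi t powr (2 * p i) * (2 * (p i)^2 * u^2 + p i * u')
     else if k = i \<and> j = 0 then p i * u'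
     else if k = j \<and> i = 0 then p j * u'
     else 0)"

lemma christbar_eq_kasner_christ:
  assumes pos: "phi t > 0" and d1: "(phi has_real_derivative deriv phi t) (at t)"
    and "k < 4" "i < 4" "j < 4"
  shows "christbar phi p k i j t = kasner_christ phi p k i j t"
proof -
  have ind: "k \<in> {0, 1, 2, 3}" "i \<in> {0, 1, 2, 3}" "j \<in> {0, 1, 2, 3}"
    using assms by auto
  have inv: "phi t powr (2 * p a) * phi t powr - (2 * p a) = 1" for a
    using pos by (simp add: powr_add[symmetric])
  show ?thesis
    using ind unfolding christbar_def christ_def dcoord_def kasner_christ_def lessThan4 Let_def
    by (simp add: deriv_kg[OF pos d1] kginv_def kg_def)
       (elim disjE; simp add: algebra_simps inv)
qed

lemma kasner_christ_has_derivative: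
  assumes pos: "phi t > 0" and d1: "(phi has_real_derivative deriv phi t) (at t)"
    and d2: "(deriv phi has_real_derivative deriv (deriv phi) t) (at t)"
  shows "(kasner_christ phi p k i j has_real_derivative kasner_christ' phi p k i j t) (at t)"
  unfolding kasner_christ_def[abs_def] kasner_christ'_def Let_def
  by (cases "k = 0 \<and> i = 0 \<and> j = 0"; cases "k = 0 \<and> i = j";
      cases "k = i \<and> j = 0"; cases "k = j \<and> i = 0")
     (use pos in \<open>auto intro!: derivative_eq_intros d1 d2
                     simp: powr_diff field_simps power2_eq_square\<close>)

(* Since christbar agrees with the closed form near t, so does its derivative. *)

lemma deriv_christbar:
  assumes S: "open S" "t \<in> S" and pos: "\<forall>s\<in>S. phi s > 0"
    and d1: "\<forall>s\<in>S. phi differentiable (at s)"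
    and d2: "deriv phi differentiable (at t)"
    and "k < 4" "i < 4" "j < 4"
  shows "deriv (christbar phi p k i j) t = kasner_christ' phi p k i j t"
proof -
  have "(kasner_christ phi p k i j has_real_derivative kasner_christ' phi p k i j t) (at t)"
    using kasner_christ_has_derivative pos d1 d2 S
    by (simp add: DERIV_deriv_iff_real_differentiable)
  then have "(christbar phi p k i j has_real_derivative kasner_christ' phi p k i j t) (at t)"
    by (rule has_field_derivative_transform_within_open[OF _ S])
       (use christbar_eq_kasner_christ pos d1 assms in
         \<open>auto simp: DERIV_deriv_iff_real_differentiable\<close>)
  then show ?thesis
    by (rule DERIV_imp_deriv)
qed

(* Curvature components: the coordinate derivative of christbar is nonzero only in direction t. *)

lemma riembar_eq:
  assumes S: "open S" "t \<in> S" and pos: "\<forall>s\<in>S. phi s > 0"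
    and d1: "\<forall>s\<in>S. phi differentiable (at s)"
    and d2: "deriv phi differentiable (at t)"
    and "k < 4" "i < 4" "j < 4" "l < 4"
  shows "riembar phi p k i j l t =
      (if i = 0 then kasner_christ' phi p k j l t else 0)
    - (if j = 0 then kasner_christ' phi p k i l t else 0)
    + (\<Sum>m<4. kasner_christ phi p m j l t * kasner_christ phi p k i m t
             - kasner_christ phi p m i l t * kasner_christ phi p k j m t)"
proof -
  have "christbar phi p a b c t = kasner_christ phi p a b c t" if "a < 4" "b < 4" "c < 4" for a b c
    using christbar_eq_kasner_christ pos d1 S that
    by (simp add: DERIV_deriv_iff_real_differentiable)
  moreover have "deriv (christbar phi p a b c) t = kasner_christ' phi p a b c t"
    if "a < 4" "b < 4" "c < 4" for a b c
    using deriv_christbar[OF S pos d1 d2 that] .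
  ultimately show ?thesis
    unfolding riembar_def dcoord_def using assms by simp
qed

lemma scalarbar_formula:
  assumes S: "open S" "t \<in> S" and pos: "\<forall>s\<in>S. phi s > 0"
    and d1: "\<forall>s\<in>S. phi differentiable (at s)"
    and d2: "deriv phi differentiable (at t)"
  shows "scalarbar phi p t =
    3 + 3 * zeta p * (deriv phi t / phi t) - 2 * zeta p * (deriv (deriv phi) t / phi t)
      - (eta p + (zeta p)^2 - 2 * zeta p) * (deriv phi t / phi t)^2"
proof -
  note R = riembar_eq[OF S pos d1 d2]
  have pt: "phi t > 0"
    using pos S by auto
  define u where "u = deriv phi t / phi t"
  define v where "v = deriv (deriv phi) t / phi t"
  define F1 where "F1 = phi t powr (2 * p 1)"
  define F2 where "F2 = phi t powr (2 * p 2)"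
  define F3 where "F3 = phi t powr (2 * p 3)"
  have F: "F1 > 0" "F2 > 0" "F3 > 0"
    using pt by (auto simp: F1_def F2_def F3_def)
  have shorthands: "deriv phi t / phi t = u" "deriv (deriv phi) t / phi t = v"
    "phi t powr (2 * p 1) = F1" "phi t powr (2 * p (Suc 0)) = F1"
    "phi t powr (2 * p 2) = F2" "phi t powr (2 * p 3) = F3"
    by (simp_all add: u_def v_def F1_def F2_def F3_def)
  have "scalarbar phi p t = 3 + 3 * zeta p * u - 2 * zeta p * v - (eta p + (zeta p)^2 - 2 * zeta p) * u^2"
    unfolding scalarbar_def riccibar_def lessThan4 zeta_three eta_three
    apply (simp add: R kginv_def kg_def lessThan4)
    apply (simp add: kasner_christ_def kasner_christ'_def Let_def powr_minus shorthands)
    using F apply (simp add: field_simps)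
    apply (simp add: algebra_simps power2_eq_square)
    done
  then show ?thesis
    by (simp add: u_def v_def)
qed

(* Derivatives only depend on the values of a function on an open neighbourhood; needed because
   phi is only known (positive, differentiable) on the interval I. *)

lemma deriv_eq_on_open:
  fixes f g :: "real \<Rightarrow> real"
  assumes "open S" "x \<in> S" "\<forall>s\<in>S. f s = g s"
  shows "deriv f x = deriv g x"
  using assms by (intro deriv_cong_ev refl) (auto elim!: eventually_mono[OF eventually_nhds_in_open])

lemma differentiable_eq_on_open:
  fixes f g :: "real \<Rightarrow> real"
  assumes "open S" "x \<in> S" "\<forall>s\<in>S. f s = g s" and "f differentiable (at x)"
  shows "g differentiable (at x)"
  using assms has_field_derivative_transform_within_open[of f _ x S g]
  by (auto simp: real_differentiable_def)

definition twice_differentiable_on :: "real set \<Rightarrow> (real \<Rightarrow> real) \<Rightarrow> bool" where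
  "twice_differentiable_on S y \<longleftrightarrow> (\<forall>x\<in>S. y differentiable (at x) \<and> deriv y differentiable (at x))"

lemma twice_differentiable_on_cong:
  assumes "open S" "\<forall>s\<in>S. f s = g s" "twice_differentiable_on S f"
  shows "twice_differentiable_on S g"
proof -
  have "\<forall>s\<in>S. deriv f s = deriv g s"
    using assms deriv_eq_on_open by blast
  then show ?thesis
    using assms differentiable_eq_on_open[of S _ f g] differentiable_eq_on_open[of S _ "deriv f" "deriv g"]
    by (auto simp: twice_differentiable_on_def)
qed

(* Smoothness of phi is used only through its first two derivatives. *)

lemma smooth_on_twice_differentiable:
  assumes "smooth_on S phi"
  shows "twice_differentiable_on S phi"
  using assms[unfolded smooth_on_def, THEN spec, of 0] assms[unfolded smooth_on_def, THEN spec, of 1]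
  by (simp add: twice_differentiable_on_def)

lemma deriv_powr:
  fixes y :: "real \<Rightarrow> real"
  assumes "y x > 0" "y differentiable (at x)"
  shows "deriv (\<lambda>s. y s powr k) x = k * y x powr (k - 1) * deriv y x"
  using assms DERIV_fun_powr[of y "deriv y x" x k]
  by (auto intro: DERIV_imp_deriv simp: DERIV_deriv_iff_real_differentiable)

lemma twice_differentiable_powr:
  assumes S: "open S" and pos: "\<forall>x\<in>S. y x > 0" and y: "twice_differentiable_on S y"
  shows "twice_differentiable_on S (\<lambda>s. y s powr k)"
  unfolding twice_differentiable_on_def
proof (intro ballI conjI)
  fix x assume x: "x \<in> S"
  have dy: "(y has_real_derivative deriv y x) (at x)" and dy': "deriv y differentiable (at x)"
    using y x by (auto simp: twice_differentiable_on_def DERIV_deriv_iff_real_differentiable)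
  show "(\<lambda>s. y s powr k) differentiable (at x)"
    using DERIV_fun_powr[OF dy, of k] pos x by (auto simp: real_differentiable_def)
  have "(\<lambda>s. y s powr (k - 1)) differentiable (at x)"
    using DERIV_fun_powr[OF dy, of "k - 1"] pos x by (auto simp: real_differentiable_def)
  then have "(\<lambda>s. k * y s powr (k - 1) * deriv y s) differentiable (at x)"
    using dy' by (intro differentiable_mult differentiable_const)
  moreover have "\<forall>s\<in>S. k * y s powr (k - 1) * deriv y s = deriv (\<lambda>s. y s powr k) s"
    using pos y by (auto simp: deriv_powr twice_differentiable_on_def)
  ultimately show "deriv (\<lambda>s. y s powr k) differentiable (at x)"
    by (rule differentiable_eq_on_open[OF S x, rotated])
qed

lemma power_log_derivatives:
  assumes S: "open S" "x \<in> S" and pos: "\<forall>s\<in>S. y s > 0"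
    and y: "twice_differentiable_on S y" and phi: "\<forall>s\<in>S. phi s = y s powr k"
  shows "deriv phi x / phi x = k * (deriv y x / y x)"
    and "deriv (deriv phi) x / phi x =
      k * (k - 1) * (deriv y x / y x)^2 + k * (deriv (deriv y) x / y x)"
proof -
  have yx: "y x > 0" "(y has_real_derivative deriv y x) (at x)"
    "(deriv y has_real_derivative deriv (deriv y) x) (at x)"
    using pos y S by (auto simp: twice_differentiable_on_def DERIV_deriv_iff_real_differentiable)
  have dphi: "\<forall>s\<in>S. deriv phi s = k * y s powr (k - 1) * deriv y s"
    using deriv_eq_on_open[OF S(1) _ phi] pos y
    by (auto simp: deriv_powr twice_differentiable_on_def)
  have "((\<lambda>s. k * y s powr (k - 1) * deriv y s) has_real_derivative
      k * ((k - 1) * y x powr (k - 1 - 1) * deriv y x) * deriv y x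
      + k * y x powr (k - 1) * deriv (deriv y) x) (at x)"
    using DERIV_fun_powr[OF yx(2) yx(1), of "k - 1"] yx
    by (auto intro!: derivative_eq_intros)
  then have "deriv (\<lambda>s. k * y s powr (k - 1) * deriv y s) x =
      k * ((k - 1) * y x powr (k - 1 - 1) * deriv y x) * deriv y x
      + k * y x powr (k - 1) * deriv (deriv y) x"
    by (rule DERIV_imp_deriv)
  then have ddphi: "deriv (deriv phi) x = k * (k - 1) * y x powr (k - 2) * (deriv y x)^2
      + k * y x powr (k - 1) * deriv (deriv y) x"
    using deriv_eq_on_open[OF S(1) S(2) dphi] by (simp add: algebra_simps power2_eq_square)
  have powers: "y x powr (k - 1) = y x powr k / y x" "y x powr (k - 2) = y x powr k / (y x)^2"
    using yx(1) by (simp_all add: powr_diff power2_eq_square)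
  have "y x powr k > 0"
    using yx(1) by simp
  then show "deriv phi x / phi x = k * (deriv y x / y x)"
    and "deriv (deriv phi) x / phi x =
      k * (k - 1) * (deriv y x / y x)^2 + k * (deriv (deriv y) x / y x)"
    using phi dphi S ddphi powers by (simp_all add: field_simps power2_eq_square)
qed

lemma zero_derivative_const:
  fixes f :: "real \<Rightarrow> real"
  assumes "\<forall>x\<in>{a<..<b}. (f has_real_derivative 0) (at x)"
  shows "\<exists>C. \<forall>x\<in>{a<..<b}. f x = C"
  using assms by (intro has_field_derivative_zero_constant) (auto intro: has_field_derivative_at_within)

lemma first_order_linear_ode:
  fixes f :: "real \<Rightarrow> real"
  assumes "\<forall>x\<in>{a<..<b}. (f has_real_derivative l * f x) (at x)"
  shows "\<exists>C. \<forall>x\<in>{a<..<b}. f x = C * exp (l * x)"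
proof -
  have "\<forall>x\<in>{a<..<b}. ((\<lambda>x. f x * exp (- l * x)) has_real_derivative 0) (at x)"
    using assms by (auto intro!: derivative_eq_intros simp: algebra_simps)
  then obtain C where C: "\<forall>x\<in>{a<..<b}. f x * exp (- l * x) = C"
    using zero_derivative_const by blast
  have "f x = C * exp (l * x)" if "x \<in> {a<..<b}" for x
    using C that by (auto simp: exp_minus field_simps)
  then show ?thesis by blast
qed

lemma exponential_iff:
  fixes phi :: "real \<Rightarrow> real"
  assumes ab: "a < b" and pos: "\<forall>t\<in>{a<..<b}. phi t > 0"
    and diff: "\<forall>t\<in>{a<..<b}. phi differentiable (at t)"
  shows "(\<forall>t\<in>{a<..<b}. deriv phi t = l * phi t) \<longleftrightarrow>
    (\<exists>C>0. \<forall>t\<in>{a<..<b}. phi t = C * exp (l * t))"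
proof
  assume "\<forall>t\<in>{a<..<b}. deriv phi t = l * phi t"
  then have "\<forall>t\<in>{a<..<b}. (phi has_real_derivative l * phi t) (at t)"
    using diff by (auto simp: DERIV_deriv_iff_real_differentiable[symmetric])
  then obtain C where C: "\<forall>t\<in>{a<..<b}. phi t = C * exp (l * t)"
    using first_order_linear_ode by blast
  have "(a + b) / 2 \<in> {a<..<b}"
    using ab by auto
  then have "C > 0"
    using C pos by (metis exp_gt_zero zero_less_mult_pos2)
  then show "\<exists>C>0. \<forall>t\<in>{a<..<b}. phi t = C * exp (l * t)"
    using C by blast
next
  assume "\<exists>C>0. \<forall>t\<in>{a<..<b}. phi t = C * exp (l * t)"
  then obtain C where C: "\<forall>t\<in>{a<..<b}. phi t = C * exp (l * t)"
    by blast
  have "deriv phi t = l * phi t" if t: "t \<in> {a<..<b}" for t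
  proof -
    have "deriv phi t = deriv (\<lambda>t. C * exp (l * t)) t"
      using deriv_eq_on_open[OF _ t C] by simp
    also have "\<dots> = l * (C * exp (l * t))"
      by (rule DERIV_imp_deriv) (auto intro!: derivative_eq_intros)
    finally show ?thesis
      using C t by simp
  qed
  then show "\<forall>t\<in>{a<..<b}. deriv phi t = l * phi t"
    by blast
qed

(* By connectedness, a continuous function with constant square s^2 is identically s or -s. *)

lemma square_const_iff:
  fixes u :: "real \<Rightarrow> real"
  assumes S: "connected S" and cont: "continuous_on S u"
  shows "(\<forall>t\<in>S. (u t)^2 = s^2) \<longleftrightarrow> (\<exists>\<sigma>\<in>{-1, 1}. \<forall>t\<in>S. u t = \<sigma> * s)"
proof
  assume sq: "\<forall>t\<in>S. (u t)^2 = s^2"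
  show "\<exists>\<sigma>\<in>{-1, 1}. \<forall>t\<in>S. u t = \<sigma> * s"
  proof (rule ccontr)
    assume none: "\<not> ?thesis"
    have vals: "u t = s \<or> u t = - s" if "t \<in> S" for t
      using sq that by (simp add: power2_eq_iff)
    obtain x y where x: "x \<in> S" "u x = s" and y: "y \<in> S" "u y = - s"
      using none vals by (metis mult_1 mult_minus1 insert_iff)
    have "s \<noteq> 0"
    proof
      assume "s = 0"
      then have "\<forall>t\<in>S. u t = 1 * s"
        using vals by auto
      then show False
        using none by blast
    qed
    have "connected (u ` S)"
      by (rule connected_continuous_image[OF cont S])
    then have "0 \<in> u ` S"
      using x y unfolding connected_iff_interval
      by (metis image_eqI linorder_le_cases neg_0_le_iff_le)
    then show False
      using sq \<open>s \<noteq> 0\<close> by auto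
  qed
qed auto

lemma log_derivative_square_iff:
  fixes phi :: "real \<Rightarrow> real"
  assumes ab: "a < b" and pos: "\<forall>t\<in>{a<..<b}. phi t > 0"
    and phi: "twice_differentiable_on {a<..<b} phi"
  shows "(\<forall>t\<in>{a<..<b}. (deriv phi t / phi t)^2 = l^2) \<longleftrightarrow>
    (\<exists>C>0. \<exists>\<sigma>\<in>{-1, 1}. \<forall>t\<in>{a<..<b}. phi t = C * exp (\<sigma> * l * t))"
proof -
  have diff: "\<forall>t\<in>{a<..<b}. phi differentiable (at t)"
    using phi by (simp add: twice_differentiable_on_def)
  have nonzero: "phi t \<noteq> 0" if "t \<in> {a<..<b}" for t
    using pos that by force
  have "continuous_on {a<..<b} (\<lambda>t. deriv phi t / phi t)"
    using phi nonzero unfolding twice_differentiable_on_def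
    by (intro continuous_at_imp_continuous_on ballI continuous_intros)
       (auto intro: differentiable_imp_continuous_within)
  then have "(\<forall>t\<in>{a<..<b}. (deriv phi t / phi t)^2 = l^2) \<longleftrightarrow>
      (\<exists>\<sigma>\<in>{-1, 1}. \<forall>t\<in>{a<..<b}. deriv phi t / phi t = \<sigma> * l)"
    by (rule square_const_iff[OF connected_Ioo])
  also have "\<dots> \<longleftrightarrow> (\<exists>\<sigma>\<in>{-1, 1}. \<forall>t\<in>{a<..<b}. deriv phi t = (\<sigma> * l) * phi t)"
  proof -
    have "(\<forall>t\<in>{a<..<b}. deriv phi t / phi t = m) \<longleftrightarrow> (\<forall>t\<in>{a<..<b}. deriv phi t = m * phi t)"
      for m
      using nonzero by (auto simp: divide_eq_eq)
    then show ?thesis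
      by blast
  qed
  also have "\<dots> \<longleftrightarrow> (\<exists>\<sigma>\<in>{-1, 1}. \<exists>C>0. \<forall>t\<in>{a<..<b}. phi t = C * exp (\<sigma> * l * t))"
    using exponential_iff[OF ab pos diff] by simp
  finally show ?thesis
    by blast
qed

definition solves_ode2 :: "real \<Rightarrow> real \<Rightarrow> real set \<Rightarrow> (real \<Rightarrow> real) \<Rightarrow> bool" where
  "solves_ode2 s c S y \<longleftrightarrow> (\<forall>x\<in>S. (y has_real_derivative deriv y x) (at x) \<and>
      (deriv y has_real_derivative s * deriv y x - c * y x) (at x))"

lemma solves_ode2_factor:
  assumes "solves_ode2 (r1 + r2) (r1 * r2) {a<..<b} y"
  shows "\<exists>A. \<forall>x\<in>{a<..<b}. deriv y x - r2 * y x = A * exp (r1 * x)"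
proof (rule first_order_linear_ode, intro ballI)
  fix x assume "x \<in> {a<..<b}"
  then have "(y has_real_derivative deriv y x) (at x)"
    "(deriv y has_real_derivative (r1 + r2) * deriv y x - r1 * r2 * y x) (at x)"
    using assms by (auto simp: solves_ode2_def)
  then show "((\<lambda>x. deriv y x - r2 * y x) has_real_derivative r1 * (deriv y x - r2 * y x)) (at x)"
    by (auto intro!: derivative_eq_intros simp: algebra_simps)
qed

(* Distinct real roots: subtracting the two first-order relations eliminates y'. *)

lemma solves_ode2_distinct_roots:
  assumes "solves_ode2 (r1 + r2) (r1 * r2) {a<..<b} y" and "r1 \<noteq> r2"
  shows "\<exists>c1 c2. \<forall>x\<in>{a<..<b}. y x = c1 * exp (r1 * x) + c2 * exp (r2 * x)"
proof -
  obtain A where A: "\<forall>x\<in>{a<..<b}. deriv y x - r2 * y x = A * exp (r1 * x)"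
    using solves_ode2_factor[OF assms(1)] by blast
  have "solves_ode2 (r2 + r1) (r2 * r1) {a<..<b} y"
    using assms(1) by (simp only: add.commute mult.commute)
  then obtain B where B: "\<forall>x\<in>{a<..<b}. deriv y x - r1 * y x = B * exp (r2 * x)"
    using solves_ode2_factor by blast
  show ?thesis
  proof (intro exI ballI)
    fix x assume x: "x \<in> {a<..<b}"
    have "(r1 - r2) * y x = (deriv y x - r2 * y x) - (deriv y x - r1 * y x)"
      by (simp add: algebra_simps)
    also have "\<dots> = A * exp (r1 * x) - B * exp (r2 * x)"
      using A B x by simp
    finally have "y x = (A * exp (r1 * x) - B * exp (r2 * x)) / (r1 - r2)"
      using assms(2) by (simp add: eq_divide_eq mult.commute)
    then show "y x = A / (r1 - r2) * exp (r1 * x) + - B / (r1 - r2) * exp (r2 * x)"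
      by (simp add: diff_divide_distrib)
  qed
qed

(* Double root r: (y exp(-r t))' is constant, so y exp(-r t) is affine. *)

lemma solves_ode2_double_root:
  assumes "solves_ode2 (2 * r) (r^2) {a<..<b} y"
  shows "\<exists>c1 c2. \<forall>x\<in>{a<..<b}. y x = c1 * exp (r * x) + c2 * x * exp (r * x)"
proof -
  have "solves_ode2 (r + r) (r * r) {a<..<b} y"
    using assms by (simp only: power2_eq_square mult_2)
  then obtain A where A: "\<forall>x\<in>{a<..<b}. deriv y x - r * y x = A * exp (r * x)"
    using solves_ode2_factor by blast
  have "\<forall>x\<in>{a<..<b}. ((\<lambda>x. y x * exp (- r * x) - A * x) has_real_derivative 0) (at x)"
  proof
    fix x assume x: "x \<in> {a<..<b}"
    then have "(y has_real_derivative deriv y x) (at x)"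
      using assms by (auto simp: solves_ode2_def)
    then have "((\<lambda>x. y x * exp (- r * x) - A * x) has_real_derivative
        (deriv y x - r * y x) * exp (- r * x) - A) (at x)"
      by (auto intro!: derivative_eq_intros simp: algebra_simps)
    moreover have "(deriv y x - r * y x) * exp (- r * x) = A"
      using A x by (simp add: mult.assoc exp_add[symmetric])
    ultimately show "((\<lambda>x. y x * exp (- r * x) - A * x) has_real_derivative 0) (at x)"
      by simp
  qed
  then obtain C where C: "\<forall>x\<in>{a<..<b}. y x * exp (- r * x) - A * x = C"
    using zero_derivative_const by blast
  show ?thesis
  proof (intro exI ballI)
    fix x assume x: "x \<in> {a<..<b}"
    have "y x * exp (- r * x) - A * x = C"
      using C x by blast
    then have scaled: "y x * exp (- r * x) = C + A * x"
      by linarith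
    have "y x = (y x * exp (- r * x)) * exp (r * x)"
      by (simp add: mult.assoc exp_add[symmetric])
    also have "\<dots> = (C + A * x) * exp (r * x)"
      unfolding scaled ..
    finally show "y x = C * exp (r * x) + A * x * exp (r * x)"
      by (simp add: algebra_simps)
  qed
qed

(* z'' = -w^2 z: the quantities z cos - (z'/w) sin and z sin + (z'/w) cos are conserved. *)

lemma harmonic_oscillator:
  fixes z z1 :: "real \<Rightarrow> real"
  assumes w: "w \<noteq> 0"
    and dz: "\<forall>x\<in>{a<..<b}. (z has_real_derivative z1 x) (at x)"
    and dz1: "\<forall>x\<in>{a<..<b}. (z1 has_real_derivative - (w^2) * z x) (at x)"
  shows "\<exists>c1 c2. \<forall>x\<in>{a<..<b}. z x = c1 * cos (w * x) + c2 * sin (w * x)"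
proof -
  define P where "P x = z x * cos (w * x) - z1 x / w * sin (w * x)" for x
  define Q where "Q x = z x * sin (w * x) + z1 x / w * cos (w * x)" for x
  have "\<forall>x\<in>{a<..<b}. (P has_real_derivative 0) (at x)"
    using dz dz1 w unfolding P_def[abs_def]
    by (auto intro!: derivative_eq_intros simp: field_simps power2_eq_square)
  then obtain c1 where c1: "\<forall>x\<in>{a<..<b}. P x = c1"
    using zero_derivative_const by blast
  have "\<forall>x\<in>{a<..<b}. (Q has_real_derivative 0) (at x)"
    using dz dz1 w unfolding Q_def[abs_def]
    by (auto intro!: derivative_eq_intros simp: field_simps power2_eq_square)
  then obtain c2 where c2: "\<forall>x\<in>{a<..<b}. Q x = c2"
    using zero_derivative_const by blast
  have "z x = P x * cos (w * x) + Q x * sin (w * x)" for x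
  proof -
    have "P x * cos (w * x) + Q x * sin (w * x) = z x * (cos (w * x) * cos (w * x) + sin (w * x) * sin (w * x))"
      by (simp only: P_def Q_def) (simp add: algebra_simps del: sin_cos_squared_add3)
    then show ?thesis
      by simp
  qed
  then show ?thesis
    using c1 c2 by (intro exI[of _ c1] exI[of _ c2]) simp
qed

(* Complex roots m +- i w: y exp(-m t) solves the harmonic oscillator equation. *)

lemma solves_ode2_complex_roots:
  assumes "solves_ode2 (2 * m) (m^2 + w^2) {a<..<b} y" and "w \<noteq> 0"
  shows "\<exists>c1 c2. \<forall>x\<in>{a<..<b}.
    y x = c1 * exp (m * x) * cos (w * x) + c2 * exp (m * x) * sin (w * x)"
proof -
  have dy: "(y has_real_derivative deriv y x) (at x)"
    and dy1: "(deriv y has_real_derivative 2 * m * deriv y x - (m^2 + w^2) * y x) (at x)"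
    if "x \<in> {a<..<b}" for x
    using assms(1) that by (auto simp: solves_ode2_def)
  define z where "z x = y x * exp (- m * x)" for x
  define z1 where "z1 x = (deriv y x - m * y x) * exp (- m * x)" for x
  have "\<forall>x\<in>{a<..<b}. (z has_real_derivative z1 x) (at x)"
    unfolding z_def[abs_def] z1_def
    by (auto intro!: derivative_eq_intros dy simp: algebra_simps)
  moreover have "\<forall>x\<in>{a<..<b}. (z1 has_real_derivative - (w^2) * z x) (at x)"
    unfolding z_def z1_def[abs_def]
    by (auto intro!: derivative_eq_intros dy dy1 simp: algebra_simps power2_eq_square)
  ultimately obtain c1 c2 where c: "\<forall>x\<in>{a<..<b}. z x = c1 * cos (w * x) + c2 * sin (w * x)"
    using harmonic_oscillator[OF assms(2)] by blast
  show ?thesis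
  proof (intro exI ballI)
    fix x assume x: "x \<in> {a<..<b}"
    have "y x = z x * exp (m * x)"
      by (simp add: z_def mult.assoc exp_add[symmetric])
    also have "\<dots> = c1 * exp (m * x) * cos (w * x) + c2 * exp (m * x) * sin (w * x)"
      using c x by (simp add: algebra_simps)
    finally show "y x = c1 * exp (m * x) * cos (w * x) + c2 * exp (m * x) * sin (w * x)" .
  qed
qed

lemma solves_ode2I:
  assumes "\<And>x. (y has_real_derivative dy x) (at x)"
    and "\<And>x. (dy has_real_derivative s * dy x - c * y x) (at x)"
  shows "solves_ode2 s c S y"
proof -
  have "deriv y = dy"
    using assms(1) by (intro ext DERIV_imp_deriv)
  then show ?thesis
    using assms by (simp add: solves_ode2_def)
qed

lemma exp_pair_solves_ode2:
  "solves_ode2 (r1 + r2) (r1 * r2) S (\<lambda>x. c1 * exp (r1 * x) + c2 * exp (r2 * x))"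
  by (rule solves_ode2I[where dy = "\<lambda>x. c1 * r1 * exp (r1 * x) + c2 * r2 * exp (r2 * x)"])
     (auto intro!: derivative_eq_intros simp: algebra_simps)

lemma double_root_solves_ode2:
  "solves_ode2 (2 * r) (r^2) S (\<lambda>x. c1 * exp (r * x) + c2 * x * exp (r * x))"
  by (rule solves_ode2I[where dy = "\<lambda>x. (c1 * r + c2 + c2 * r * x) * exp (r * x)"])
     (auto intro!: derivative_eq_intros simp: algebra_simps power2_eq_square)

lemma oscillation_solves_ode2:
  "solves_ode2 (2 * m) (m^2 + w^2) S
     (\<lambda>x. c1 * exp (m * x) * cos (w * x) + c2 * exp (m * x) * sin (w * x))"
  by (rule solves_ode2I[where dy = "\<lambda>x. exp (m * x) *
        ((m * c1 + w * c2) * cos (w * x) + (m * c2 - w * c1) * sin (w * x))"])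
     (auto intro!: derivative_eq_intros simp: algebra_simps power2_eq_square)

lemma solves_ode2_classification:
  assumes y: "solves_ode2 s c {a<..<b} y" and D: "D = s^2 - 4 * c"
  shows "D > 0 \<Longrightarrow> \<exists>c1 c2. \<forall>x\<in>{a<..<b}.
           y x = c1 * exp ((s + sqrt D) / 2 * x) + c2 * exp ((s - sqrt D) / 2 * x)"
    and "D = 0 \<Longrightarrow> \<exists>c1 c2. \<forall>x\<in>{a<..<b}. y x = c1 * exp (s / 2 * x) + c2 * x * exp (s / 2 * x)"
    and "D < 0 \<Longrightarrow> \<exists>c1 c2. \<forall>x\<in>{a<..<b}.
           y x = c1 * exp (s / 2 * x) * cos (sqrt (- D) / 2 * x)
               + c2 * exp (s / 2 * x) * sin (sqrt (- D) / 2 * x)"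
proof -
  assume "D > 0"
  then have "s = (s + sqrt D) / 2 + (s - sqrt D) / 2" "c = (s + sqrt D) / 2 * ((s - sqrt D) / 2)"
    and "(s + sqrt D) / 2 \<noteq> (s - sqrt D) / 2"
    using D by (simp_all add: field_simps power2_eq_square)
  then show "\<exists>c1 c2. \<forall>x\<in>{a<..<b}.
      y x = c1 * exp ((s + sqrt D) / 2 * x) + c2 * exp ((s - sqrt D) / 2 * x)"
    using solves_ode2_distinct_roots y by metis
next
  assume "D = 0"
  then have "s = 2 * (s / 2)" "c = (s / 2)^2"
    using D by (simp_all add: power2_eq_square)
  then show "\<exists>c1 c2. \<forall>x\<in>{a<..<b}. y x = c1 * exp (s / 2 * x) + c2 * x * exp (s / 2 * x)"
    using solves_ode2_double_root y by metis
next
  assume "D < 0"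
  then have "s = 2 * (s / 2)" "c = (s / 2)^2 + (sqrt (- D) / 2)^2" "sqrt (- D) / 2 \<noteq> 0"
    using D by (simp_all add: power_divide field_simps)
  then show "\<exists>c1 c2. \<forall>x\<in>{a<..<b}.
      y x = c1 * exp (s / 2 * x) * cos (sqrt (- D) / 2 * x)
          + c2 * exp (s / 2 * x) * sin (sqrt (- D) / 2 * x)"
    using solves_ode2_complex_roots y by metis
qed

lemma basis_solves_ode2:
  assumes D: "D = s^2 - 4 * c"
  shows "D > 0 \<Longrightarrow> solves_ode2 s c S
           (\<lambda>x. c1 * exp ((s + sqrt D) / 2 * x) + c2 * exp ((s - sqrt D) / 2 * x))"
    and "D = 0 \<Longrightarrow> solves_ode2 s c S (\<lambda>x. c1 * exp (s / 2 * x) + c2 * x * exp (s / 2 * x))"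
    and "D < 0 \<Longrightarrow> solves_ode2 s c S
           (\<lambda>x. c1 * exp (s / 2 * x) * cos (sqrt (- D) / 2 * x)
               + c2 * exp (s / 2 * x) * sin (sqrt (- D) / 2 * x))"
proof -
  assume "D > 0"
  then have "(s + sqrt D) / 2 + (s - sqrt D) / 2 = s" "(s + sqrt D) / 2 * ((s - sqrt D) / 2) = c"
    using D by (simp_all add: field_simps power2_eq_square)
  with exp_pair_solves_ode2 show "solves_ode2 s c S
      (\<lambda>x. c1 * exp ((s + sqrt D) / 2 * x) + c2 * exp ((s - sqrt D) / 2 * x))"
    by metis
next
  assume "D = 0"
  then have "2 * (s / 2) = s" "(s / 2)^2 = c"
    using D by (simp_all add: power2_eq_square)
  with double_root_solves_ode2[of "s / 2" S c1 c2]
  show "solves_ode2 s c S (\<lambda>x. c1 * exp (s / 2 * x) + c2 * x * exp (s / 2 * x))"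
    by simp
next
  assume "D < 0"
  then have "2 * (s / 2) = s" "(s / 2)^2 + (sqrt (- D) / 2)^2 = c"
    using D by (simp_all add: power_divide field_simps)
  with oscillation_solves_ode2[of "s / 2" "sqrt (- D) / 2" S c1 c2]
  show "solves_ode2 s c S
      (\<lambda>x. c1 * exp (s / 2 * x) * cos (sqrt (- D) / 2 * x)
          + c2 * exp (s / 2 * x) * sin (sqrt (- D) / 2 * x))"
    by simp
qed

lemma solves_ode2_twice_differentiable:
  "solves_ode2 s c S y \<Longrightarrow> twice_differentiable_on S y"
  by (auto simp: solves_ode2_def twice_differentiable_on_def real_differentiable_def)

lemma scalarbar_zeta_zero:
  assumes Z: "zeta p = 0" and S: "open S" "t \<in> S" and pos: "\<forall>s\<in>S. phi s > 0"
    and phi: "twice_differentiable_on S phi"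
  shows "scalarbar phi p t = 3 - eta p * (deriv phi t / phi t)^2"
  using scalarbar_formula[OF S pos, of p] phi S Z by (simp add: twice_differentiable_on_def)

lemma positive_constant_iff:
  fixes phi :: "real \<Rightarrow> real"
  assumes ab: "a < b" and pos: "\<forall>t\<in>{a<..<b}. phi t > 0"
  shows "(\<exists>c. \<forall>t\<in>{a<..<b}. phi t = c) \<longleftrightarrow> (\<exists>C>0. \<forall>t\<in>{a<..<b}. phi t = C)"
proof
  assume "\<exists>c. \<forall>t\<in>{a<..<b}. phi t = c"
  then obtain c where c: "\<forall>t\<in>{a<..<b}. phi t = c"
    by blast
  have mid: "(a + b) / 2 \<in> {a<..<b}"
    using ab by simp
  then have "c > 0"
    using c[rule_format, OF mid] pos[rule_format, OF mid] by simp
  then show "\<exists>C>0. \<forall>t\<in>{a<..<b}. phi t = C"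
    using c by blast
qed blast

lemma constant_scalarbar_zeta_zero_eta_pos:
  assumes ab: "t1 < t2" and pos: "\<forall>t\<in>{t1<..<t2}. phi t > 0"
    and phi: "twice_differentiable_on {t1<..<t2} phi" and Z: "zeta p = 0" and eta: "eta p > 0"
  shows "(\<forall>t\<in>{t1<..<t2}. scalarbar phi p t = Sb) \<longleftrightarrow>
    \<not> (Sb > 3)
    \<and> (Sb = 3 \<longrightarrow> (\<exists>c. \<forall>t\<in>{t1<..<t2}. phi t = c))
    \<and> (Sb < 3 \<longrightarrow> (\<exists>c0>0. \<exists>\<sigma>\<in>{-1, 1::real}.
          \<forall>t\<in>{t1<..<t2}. phi t = c0 * exp (\<sigma> * sqrt (- (Sb - 3) / eta p) * t)))"
proof -
  define u where "u t = deriv phi t / phi t" for t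
  have scal: "\<forall>t\<in>{t1<..<t2}. scalarbar phi p t = 3 - eta p * (u t)^2"
    using scalarbar_zeta_zero[OF Z open_greaterThanLessThan _ pos phi] by (simp add: u_def)
  have mid: "(t1 + t2) / 2 \<in> {t1<..<t2}"
    using ab by simp
  show ?thesis
  proof (cases "Sb > 3")
    case True
    have "scalarbar phi p ((t1 + t2) / 2) \<le> 3"
      using scal mid eta by simp
    then have "\<not> (\<forall>t\<in>{t1<..<t2}. scalarbar phi p t = Sb)"
      using True mid by force
    then show ?thesis
      using True by simp
  next
    case False
    define l where "l = sqrt ((3 - Sb) / eta p)"
    have l: "l^2 = (3 - Sb) / eta p"
      using False eta by (simp add: l_def)
    have "scalarbar phi p t = Sb \<longleftrightarrow> (u t)^2 = l^2" if "t \<in> {t1<..<t2}" for t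
      using scal[rule_format, OF that] eta by (auto simp: l field_simps)
    then have "(\<forall>t\<in>{t1<..<t2}. scalarbar phi p t = Sb) \<longleftrightarrow> (\<forall>t\<in>{t1<..<t2}. (u t)^2 = l^2)"
      by simp
    also have "\<dots> \<longleftrightarrow> (\<exists>C>0. \<exists>\<sigma>\<in>{-1, 1}. \<forall>t\<in>{t1<..<t2}. phi t = C * exp (\<sigma> * l * t))"
      unfolding u_def by (rule log_derivative_square_iff[OF ab pos phi])
    finally have const: "(\<forall>t\<in>{t1<..<t2}. scalarbar phi p t = Sb) \<longleftrightarrow>
        (\<exists>C>0. \<exists>\<sigma>\<in>{-1, 1}. \<forall>t\<in>{t1<..<t2}. phi t = C * exp (\<sigma> * l * t))" .
    show ?thesis
    proof (cases "Sb = 3")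
      case True
      then have "l = 0"
        by (simp add: l_def)
      then show ?thesis
        using const True positive_constant_iff[OF ab pos] by simp blast
    next
      case False
      then show ?thesis
        using const \<open>\<not> Sb > 3\<close> by (simp add: l_def)
    qed
  qed
qed

(* Cases (1) and (2): for eta = 0 the curvature is identically 3. *)

lemma constant_scalarbar_zeta_zero:
  assumes ab: "t1 < t2" and pos: "\<forall>t\<in>{t1<..<t2}. phi t > 0"
    and phi: "twice_differentiable_on {t1<..<t2} phi" and Z: "zeta p = 0"
  shows "(\<forall>t\<in>{t1<..<t2}. scalarbar phi p t = Sb) \<longleftrightarrow>
    (eta p = 0 \<and> Sb = 3)
    \<or> (eta p \<noteq> 0 \<and> \<not> (Sb > 3)
         \<and> (Sb = 3 \<longrightarrow> (\<exists>c. \<forall>t\<in>{t1<..<t2}. phi t = c))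
         \<and> (Sb < 3 \<longrightarrow> (\<exists>c0>0. \<exists>\<sigma>\<in>{-1, 1::real}.
               \<forall>t\<in>{t1<..<t2}. phi t = c0 * exp (\<sigma> * sqrt (- (Sb - 3) / eta p) * t))))"
proof (cases "eta p = 0")
  case True
  then have flat: "\<forall>t\<in>{t1<..<t2}. scalarbar phi p t = 3"
    using scalarbar_zeta_zero[OF Z open_greaterThanLessThan _ pos phi] by simp
  have mid: "(t1 + t2) / 2 \<in> {t1<..<t2}"
    using ab by simp
  have "(\<forall>t\<in>{t1<..<t2}. scalarbar phi p t = Sb) \<longleftrightarrow> Sb = 3"
  proof
    assume "\<forall>t\<in>{t1<..<t2}. scalarbar phi p t = Sb"
    then show "Sb = 3"
      using flat mid by metis
  qed (use flat in simp)
  then show ?thesis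
    using True by simp
next
  case False
  then have "eta p > 0"
    using eta_three[of p] by (simp add: order_le_neq_trans)
  then show ?thesis
    using constant_scalarbar_zeta_zero_eta_pos[OF ab pos phi Z] False by simp
qed

(* Case zeta <> 0: for phi = y^k with k = 2 zeta/(eta + zeta^2) the quadratic terms in y'/y cancel
   and the scalar curvature becomes 3 + 4 zeta^2/(eta + zeta^2) (3/2 y' - y'')/y. *)

lemma scalarbar_of_power:
  assumes Z: "zeta p \<noteq> 0" and k: "k = 2 * zeta p / (eta p + (zeta p)^2)"
    and S: "open S" "x \<in> S" and pos: "\<forall>s\<in>S. y s > 0"
    and y: "twice_differentiable_on S y" and phi: "\<forall>s\<in>S. phi s = y s powr k"
  shows "scalarbar phi p x = 3 + 4 * (zeta p)^2 / (eta p + (zeta p)^2)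
           * ((3/2 * deriv y x - deriv (deriv y) x) / y x)"
proof -
  define K where "K = eta p + (zeta p)^2"
  define q where "q = deriv y x / y x"
  define r where "r = deriv (deriv y) x / y x"
  have K: "K > 0" and kK: "k * K = 2 * zeta p"
    using eta_plus_zeta_sq_pos[OF Z] by (simp_all add: K_def k)
  have phi_pos: "\<forall>s\<in>S. phi s > 0"
    using pos phi by force
  have "twice_differentiable_on S phi"
    by (rule twice_differentiable_on_cong[OF S(1) _ twice_differentiable_powr[OF S(1) pos y, of k]])
       (use phi in simp)
  then have "scalarbar phi p x = 3 + 3 * zeta p * (deriv phi x / phi x)
      - 2 * zeta p * (deriv (deriv phi) x / phi x) - (K - 2 * zeta p) * (deriv phi x / phi x)^2"
    unfolding K_def using S by (intro scalarbar_formula[OF S phi_pos]) (auto simp: twice_differentiable_on_def)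
  also have "\<dots> = 3 + 3 * zeta p * (k * q) - 2 * zeta p * (k * (k - 1) * q^2 + k * r)
      - (K - 2 * zeta p) * (k * q)^2"
    using power_log_derivatives[OF S pos y phi] by (simp add: q_def r_def)
  also have "\<dots> = 3 + q^2 * k * (2 * zeta p - k * K) + 2 * zeta p * k * (3/2 * q - r)"
    by (simp add: algebra_simps power2_eq_square)
  also have "\<dots> = 3 + 2 * zeta p * k * (3/2 * q - r)"
    using kK by simp
  also have "\<dots> = 3 + 4 * (zeta p)^2 / K * ((3/2 * deriv y x - deriv (deriv y) x) / y x)"
    by (simp add: k K_def q_def r_def diff_divide_distrib power2_eq_square)
  finally show ?thesis
    by (simp add: K_def)
qed

lemma constant_scalarbar_iff_solves_ode2:
  assumes Z: "zeta p \<noteq> 0" and k: "k = 2 * zeta p / (eta p + (zeta p)^2)"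
    and c: "c = (Sb - 3) * (eta p + (zeta p)^2) / (4 * (zeta p)^2)"
    and S: "open S" and pos: "\<forall>s\<in>S. y s > 0"
    and y: "twice_differentiable_on S y" and phi: "\<forall>s\<in>S. phi s = y s powr k"
  shows "(\<forall>x\<in>S. scalarbar phi p x = Sb) \<longleftrightarrow> solves_ode2 (3/2) c S y"
proof -
  define A where "A = 4 * (zeta p)^2 / (eta p + (zeta p)^2)"
  have A: "A > 0" and cA: "c * A = Sb - 3"
    using eta_plus_zeta_sq_pos[OF Z] Z by (simp_all add: A_def c)
  have pointwise: "scalarbar phi p x = Sb \<longleftrightarrow> deriv (deriv y) x = 3/2 * deriv y x - c * y x"
    if x: "x \<in> S" for x
  proof -
    define X where "X = (3/2 * deriv y x - deriv (deriv y) x) / y x"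
    have "scalarbar phi p x = Sb \<longleftrightarrow> A * X = A * c"
      using scalarbar_of_power[OF Z k S x pos y phi] cA by (auto simp: A_def X_def mult.commute)
    also have "\<dots> \<longleftrightarrow> X = c"
      using A by simp
    also have "\<dots> \<longleftrightarrow> 3/2 * deriv y x - deriv (deriv y) x = c * y x"
    proof -
      have "y x \<noteq> 0"
        using pos x by force
      then show ?thesis
        by (simp add: X_def divide_eq_eq)
    qed
    also have "\<dots> \<longleftrightarrow> deriv (deriv y) x = 3/2 * deriv y x - c * y x"
      by argo
    finally show ?thesis .
  qed
  have second_deriv: "(deriv y has_real_derivative v) (at x) \<longleftrightarrow> deriv (deriv y) x = v"
    and first_deriv: "(y has_real_derivative deriv y x) (at x)" if "x \<in> S" for x v
  proof -
    have "(deriv y has_real_derivative deriv (deriv y) x) (at x)"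
      and "(y has_real_derivative deriv y x) (at x)"
      using y that by (auto simp: twice_differentiable_on_def DERIV_deriv_iff_real_differentiable)
    then show "(deriv y has_real_derivative v) (at x) \<longleftrightarrow> deriv (deriv y) x = v"
      and "(y has_real_derivative deriv y x) (at x)"
      by (auto dest: DERIV_unique)
  qed
  show ?thesis
    unfolding solves_ode2_def using pointwise first_deriv second_deriv by simp
qed

definition power_on :: "real set \<Rightarrow> real \<Rightarrow> (real \<Rightarrow> real) \<Rightarrow> (real \<Rightarrow> real) \<Rightarrow> bool" where
  "power_on S k y phi \<longleftrightarrow> (\<forall>t\<in>S. y t > 0 \<and> phi t = y t powr k)"

lemma power_on_cong:
  "power_on S k y phi \<Longrightarrow> \<forall>t\<in>S. y t = z t \<Longrightarrow> power_on S k z phi"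
  by (simp add: power_on_def)

lemma power_of_solution_shapes:
  assumes y: "power_on {a<..<b} k y phi" "solves_ode2 s c {a<..<b} y" and D: "D = s^2 - 4 * c"
  shows "D > 0 \<Longrightarrow> \<exists>c1 c2. power_on {a<..<b} k
           (\<lambda>x. c1 * exp ((s + sqrt D) / 2 * x) + c2 * exp ((s - sqrt D) / 2 * x)) phi"
    and "D = 0 \<Longrightarrow> \<exists>c1 c2. power_on {a<..<b} k
           (\<lambda>x. c1 * exp (s / 2 * x) + c2 * x * exp (s / 2 * x)) phi"
    and "D < 0 \<Longrightarrow> \<exists>c1 c2. power_on {a<..<b} k
           (\<lambda>x. c1 * exp (s / 2 * x) * cos (sqrt (- D) / 2 * x)
               + c2 * exp (s / 2 * x) * sin (sqrt (- D) / 2 * x)) phi"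
proof -
  note base_change = power_on_cong[OF y(1)]
  assume "D > 0"
  then obtain c1 c2 where "\<forall>x\<in>{a<..<b}.
      y x = c1 * exp ((s + sqrt D) / 2 * x) + c2 * exp ((s - sqrt D) / 2 * x)"
    using solves_ode2_classification(1)[OF y(2) D] by blast
  from base_change[OF this] show "\<exists>c1 c2. power_on {a<..<b} k
      (\<lambda>x. c1 * exp ((s + sqrt D) / 2 * x) + c2 * exp ((s - sqrt D) / 2 * x)) phi"
    by blast
next
  note base_change = power_on_cong[OF y(1)]
  assume "D = 0"
  then obtain c1 c2 where "\<forall>x\<in>{a<..<b}. y x = c1 * exp (s / 2 * x) + c2 * x * exp (s / 2 * x)"
    using solves_ode2_classification(2)[OF y(2) D] by blast
  from base_change[OF this] show "\<exists>c1 c2. power_on {a<..<b} k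
      (\<lambda>x. c1 * exp (s / 2 * x) + c2 * x * exp (s / 2 * x)) phi"
    by blast
next
  note base_change = power_on_cong[OF y(1)]
  assume "D < 0"
  then obtain c1 c2 where "\<forall>x\<in>{a<..<b}. y x = c1 * exp (s / 2 * x) * cos (sqrt (- D) / 2 * x)
      + c2 * exp (s / 2 * x) * sin (sqrt (- D) / 2 * x)"
    using solves_ode2_classification(3)[OF y(2) D] by blast
  from base_change[OF this] show "\<exists>c1 c2. power_on {a<..<b} k
      (\<lambda>x. c1 * exp (s / 2 * x) * cos (sqrt (- D) / 2 * x)
          + c2 * exp (s / 2 * x) * sin (sqrt (- D) / 2 * x)) phi"
    by blast
qed

lemma power_of_solution_iff:
  assumes D: "D = s^2 - 4 * c"
  shows "(\<exists>y. power_on {a<..<b} k y phi \<and> solves_ode2 s c {a<..<b} y) \<longleftrightarrow>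
    (D > 0 \<longrightarrow> (\<exists>c1 c2. power_on {a<..<b} k
        (\<lambda>x. c1 * exp ((s + sqrt D) / 2 * x) + c2 * exp ((s - sqrt D) / 2 * x)) phi))
  \<and> (D = 0 \<longrightarrow> (\<exists>c1 c2. power_on {a<..<b} k
        (\<lambda>x. c1 * exp (s / 2 * x) + c2 * x * exp (s / 2 * x)) phi))
  \<and> (D < 0 \<longrightarrow> (\<exists>c1 c2. power_on {a<..<b} k
        (\<lambda>x. c1 * exp (s / 2 * x) * cos (sqrt (- D) / 2 * x)
            + c2 * exp (s / 2 * x) * sin (sqrt (- D) / 2 * x)) phi))"
  (is "?sol \<longleftrightarrow> ?cases")
proof
  assume ?sol
  then obtain y where y: "power_on {a<..<b} k y phi" "solves_ode2 s c {a<..<b} y"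
    by blast
  show ?cases
    using power_of_solution_shapes[OF y D] by blast
next
  assume cases: ?cases
  consider "D > 0" | "D = 0" | "D < 0"
    by linarith
  then show ?sol
  proof cases
    case 1
    then show ?thesis
      using cases basis_solves_ode2(1)[OF D] by blast
  next
    case 2
    then show ?thesis
      using cases basis_solves_ode2(2)[OF D] by blast
  next
    case 3
    then show ?thesis
      using cases basis_solves_ode2(3)[OF D] by blast
  qed
qed

(* Constant curvature iff phi is the k-th power of a solution; the witness is phi^(1/k). *)

lemma constant_scalarbar_iff_power_solution:
  assumes pos: "\<forall>t\<in>{a<..<b}. phi t > 0" and phi: "twice_differentiable_on {a<..<b} phi"
    and Z: "zeta p \<noteq> 0" and k: "k = 2 * zeta p / (eta p + (zeta p)^2)"
    and c: "c = (Sb - 3) * (eta p + (zeta p)^2) / (4 * (zeta p)^2)"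
  shows "(\<forall>t\<in>{a<..<b}. scalarbar phi p t = Sb) \<longleftrightarrow>
    (\<exists>y. power_on {a<..<b} k y phi \<and> solves_ode2 (3/2) c {a<..<b} y)"
proof
  assume const: "\<forall>t\<in>{a<..<b}. scalarbar phi p t = Sb"
  define y where "y t = phi t powr (1 / k)" for t
  have "k \<noteq> 0"
    using Z eta_plus_zeta_sq_pos[OF Z] by (simp add: k)
  then have y_power: "power_on {a<..<b} k y phi"
    using pos by (auto simp: power_on_def y_def powr_powr)
  have "twice_differentiable_on {a<..<b} y"
    unfolding y_def by (rule twice_differentiable_powr[OF open_greaterThanLessThan pos phi])
  moreover have "\<forall>t\<in>{a<..<b}. y t > 0" "\<forall>t\<in>{a<..<b}. phi t = y t powr k"
    using y_power by (simp_all add: power_on_def)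
  ultimately have "solves_ode2 (3/2) c {a<..<b} y"
    using constant_scalarbar_iff_solves_ode2[OF Z k c open_greaterThanLessThan] const by blast
  then show "\<exists>y. power_on {a<..<b} k y phi \<and> solves_ode2 (3/2) c {a<..<b} y"
    using y_power by blast
next
  assume "\<exists>y. power_on {a<..<b} k y phi \<and> solves_ode2 (3/2) c {a<..<b} y"
  then obtain y where y: "power_on {a<..<b} k y phi" "solves_ode2 (3/2) c {a<..<b} y"
    by blast
  moreover have "\<forall>t\<in>{a<..<b}. y t > 0" "\<forall>t\<in>{a<..<b}. phi t = y t powr k"
    using y(1) by (simp_all add: power_on_def)
  ultimately show "\<forall>t\<in>{a<..<b}. scalarbar phi p t = Sb"
    using constant_scalarbar_iff_solves_ode2[OF Z k c open_greaterThanLessThan]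
      solves_ode2_twice_differentiable[OF y(2)]
    by blast
qed

lemma discriminant_signs:
  assumes Z: "zeta p \<noteq> 0"
    and D: "D = 9/4 - (Sb - 3) * (eta p + (zeta p)^2) / (zeta p)^2"
    and B: "B = 9 * (zeta p)^2 / (4 * (eta p + (zeta p)^2)) + 3"
  shows "Sb < B \<longleftrightarrow> D > 0" and "Sb = B \<longleftrightarrow> D = 0" and "Sb > B \<longleftrightarrow> D < 0"
proof -
  define K where "K = eta p + (zeta p)^2"
  define q where "q = K / (zeta p)^2"
  have K: "K > 0"
    using eta_plus_zeta_sq_pos[OF Z] by (simp add: K_def)
  then have q: "q > 0"
    using Z by (simp add: q_def)
  have "D = (B - Sb) * q"
    using K Z unfolding D B K_def[symmetric] q_def by (simp add: field_simps power2_eq_square)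
  then show "Sb < B \<longleftrightarrow> D > 0" and "Sb = B \<longleftrightarrow> D = 0" and "Sb > B \<longleftrightarrow> D < 0"
    using q by (auto simp: zero_less_mult_iff mult_less_0_iff)
qed

lemma constant_scalarbar_zeta_nonzero:
  assumes pos: "\<forall>t\<in>{t1<..<t2}. phi t > 0" and phi: "twice_differentiable_on {t1<..<t2} phi"
    and Z: "zeta p \<noteq> 0"
  shows "(\<forall>t\<in>{t1<..<t2}. scalarbar phi p t = Sb) \<longleftrightarrow>
    (let D = 9/4 - (Sb - 3) * (eta p + (zeta p)^2) / (zeta p)^2;
         k = 2 * zeta p / (eta p + (zeta p)^2);
         B = 9 * (zeta p)^2 / (4 * (eta p + (zeta p)^2)) + 3 in
     (Sb < B \<longrightarrow> (\<exists>c1 c2. \<forall>t\<in>{t1<..<t2}.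
         c1 * exp ((3/2 + sqrt D) / 2 * t) + c2 * exp ((3/2 - sqrt D) / 2 * t) > 0 \<and>
         phi t = (c1 * exp ((3/2 + sqrt D) / 2 * t) + c2 * exp ((3/2 - sqrt D) / 2 * t)) powr k))
   \<and> (Sb = B \<longrightarrow> (\<exists>c1 c2. \<forall>t\<in>{t1<..<t2}.
         c1 * exp (3/4 * t) + c2 * t * exp (3/4 * t) > 0 \<and>
         phi t = (c1 * exp (3/4 * t) + c2 * t * exp (3/4 * t)) powr k))
   \<and> (Sb > B \<longrightarrow> (\<exists>c1 c2. \<forall>t\<in>{t1<..<t2}.
         c1 * exp (3/4 * t) * cos (sqrt (- D) / 2 * t) + c2 * exp (3/4 * t) * sin (sqrt (- D) / 2 * t) > 0 \<and>
         phi t = (c1 * exp (3/4 * t) * cos (sqrt (- D) / 2 * t)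
                  + c2 * exp (3/4 * t) * sin (sqrt (- D) / 2 * t)) powr k)))"
  (is "?const \<longleftrightarrow> ?shape")
proof -
  define D where "D = 9/4 - (Sb - 3) * (eta p + (zeta p)^2) / (zeta p)^2"
  define k where "k = 2 * zeta p / (eta p + (zeta p)^2)"
  define B where "B = 9 * (zeta p)^2 / (4 * (eta p + (zeta p)^2)) + 3"
  define c where "c = (Sb - 3) * (eta p + (zeta p)^2) / (4 * (zeta p)^2)"
  have D_char: "D = (3/2)^2 - 4 * c"
    using Z by (simp add: D_def c_def field_simps power2_eq_square)
  note signs = discriminant_signs[OF Z D_def B_def]
  have "(\<forall>t\<in>{t1<..<t2}. scalarbar phi p t = Sb) \<longleftrightarrow>
      (\<exists>y. power_on {t1<..<t2} k y phi \<and> solves_ode2 (3/2) c {t1<..<t2} y)"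
    by (rule constant_scalarbar_iff_power_solution[OF pos phi Z k_def c_def])
  also have "\<dots> \<longleftrightarrow> ?shape"
    unfolding power_of_solution_iff[OF D_char]
    unfolding Let_def power_on_def
    unfolding D_def[symmetric] k_def[symmetric] B_def[symmetric] signs
    by simp
  finally show ?thesis .
qed

theorem theorem5p6:
  fixes phi :: "real \<Rightarrow> real" and p :: "nat \<Rightarrow> real" and t1 t2 Sb :: real
  assumes "t1 < t2"
    and "\<forall>t\<in>{t1<..<t2}. phi t > 0"
    and "smooth_on {t1<..<t2} phi"
  shows "(\<forall>t\<in>{t1<..<t2}. scalarbar phi p t = Sb) \<longleftrightarrow>
    ((zeta p = 0 \<and> eta p = 0 \<and> Sb = 3)
     \<or> (zeta p = 0 \<and> eta p \<noteq> 0 \<and> \<not> (Sb > 3)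
         \<and> (Sb = 3 \<longrightarrow> (\<exists>c. \<forall>t\<in>{t1<..<t2}. phi t = c))
         \<and> (Sb < 3 \<longrightarrow> (\<exists>c0>0. \<exists>\<sigma>\<in>{-1, 1::real}.
               \<forall>t\<in>{t1<..<t2}. phi t = c0 * exp (\<sigma> * sqrt (- (Sb - 3) / eta p) * t))))
     \<or> (zeta p \<noteq> 0 \<and>
         (let D = 9/4 - (Sb - 3) * (eta p + (zeta p)^2) / (zeta p)^2;
              k = 2 * zeta p / (eta p + (zeta p)^2);
              B = 9 * (zeta p)^2 / (4 * (eta p + (zeta p)^2)) + 3 in
          (Sb < B \<longrightarrow> (\<exists>c1 c2. \<forall>t\<in>{t1<..<t2}.
              c1 * exp ((3/2 + sqrt D) / 2 * t) + c2 * exp ((3/2 - sqrt D) / 2 * t) > 0 \<and>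
              phi t = (c1 * exp ((3/2 + sqrt D) / 2 * t) + c2 * exp ((3/2 - sqrt D) / 2 * t)) powr k))
        \<and> (Sb = B \<longrightarrow> (\<exists>c1 c2. \<forall>t\<in>{t1<..<t2}.
              c1 * exp (3/4 * t) + c2 * t * exp (3/4 * t) > 0 \<and>
              phi t = (c1 * exp (3/4 * t) + c2 * t * exp (3/4 * t)) powr k))
        \<and> (Sb > B \<longrightarrow> (\<exists>c1 c2. \<forall>t\<in>{t1<..<t2}.
              c1 * exp (3/4 * t) * cos (sqrt (- D) / 2 * t) + c2 * exp (3/4 * t) * sin (sqrt (- D) / 2 * t) > 0 \<and>
              phi t = (c1 * exp (3/4 * t) * cos (sqrt (- D) / 2 * t)
                       + c2 * exp (3/4 * t) * sin (sqrt (- D) / 2 * t)) powr k)))))"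
proof -
  have phi: "twice_differentiable_on {t1<..<t2} phi"
    using assms(3) by (rule smooth_on_twice_differentiable)
  show ?thesis
  proof (cases "zeta p = 0")
    case True
    then show ?thesis
      using constant_scalarbar_zeta_zero[OF assms(1,2) phi True] by simp
  next
    case False
    then show ?thesis
      using constant_scalarbar_zeta_nonzero[OF assms(2) phi False] by simp
  qed
qed

end
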